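(* Let $n\ge1$ and let $\Sigma=\begin{bmatrix}\Sigma_{11}&\Sigma_{12}\\\Sigma_{12}&\Sigma_{22}\end{bmatrix}$ be a positive definite $2\times2$ matrix with $cn\le\lambda_{\min}(\Sigma)\le\lambda_{\max}(\Sigma)\le Cn$ for constants $0<c\le C$. Let $Z\sim N(\mu,\Sigma)$ with $\mu=(\mu_1,\mu_2)$, let $r\ge1$ and $t=r\sqrt n$. Then $$\mathbb P\big(Z\in(-\infty,\mu_1-t]\times(-\infty,\mu_2-t]\big)\ge\alpha_r(c,C):=\big(\Phi(a)-\Phi(2a)\big)\,\Phi\!\Big(\frac{a(1+2\rho_0)}{\sqrt{1-\rho_0^2}}\Big),$$ where $a=-r/\sqrt c$ and $\rho_0=\sqrt{1-(c/C)^2}$.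
   Context: $\Phi(t)=\frac1{\sqrt{2\pi}}\int_{-\infty}^te^{-x^2/2}dx$ is the standard normal distribution function; $\lambda_{\min},\lambda_{\max}$ are the smallest and largest eigenvalues; $N(\mu,\Sigma)$ is the bivariate Gaussian with mean $\mu$ and covariance $\Sigma$. *)

theory Defs
  imports "HOL-Probability.Probability"
begin

definition Phi :: "real \<Rightarrow> real" where
  "Phi t = measure (density lborel (\<lambda>x. ennreal (std_normal_density x))) {..t}"

definition eigenvalues2 :: "real \<Rightarrow> real \<Rightarrow> real \<Rightarrow> real set" where
  "eigenvalues2 s11 s12 s22 =
     {l. \<exists>x y. (x, y) \<noteq> (0, 0) \<and> s11 * x + s12 * y = l * x \<and> s12 * x + s22 * y = l * y}"

definition lambda_min2 :: "real \<Rightarrow> real \<Rightarrow> real \<Rightarrow> real" where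
  "lambda_min2 s11 s12 s22 = Inf (eigenvalues2 s11 s12 s22)"

definition lambda_max2 :: "real \<Rightarrow> real \<Rightarrow> real \<Rightarrow> real" where
  "lambda_max2 s11 s12 s22 = Sup (eigenvalues2 s11 s12 s22)"

definition pos_def2 :: "real \<Rightarrow> real \<Rightarrow> real \<Rightarrow> bool" where
  "pos_def2 s11 s12 s22 \<longleftrightarrow>
     (\<forall>x y. (x, y) \<noteq> (0, 0) \<longrightarrow> s11 * x\<^sup>2 + 2 * s12 * x * y + s22 * y\<^sup>2 > 0)"

definition bivariate_normal_density ::
  "real \<Rightarrow> real \<Rightarrow> real \<Rightarrow> real \<Rightarrow> real \<Rightarrow> real \<times> real \<Rightarrow> real" where
  "bivariate_normal_density m1 m2 s11 s12 s22 z =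
     (let d = s11 * s22 - s12\<^sup>2; u = fst z - m1; v = snd z - m2 in
      exp (- (s22 * u\<^sup>2 - 2 * s12 * u * v + s11 * v\<^sup>2) / (2 * d)) / (2 * pi * sqrt d))"

definition bivariate_normal ::
  "real \<Rightarrow> real \<Rightarrow> real \<Rightarrow> real \<Rightarrow> real \<Rightarrow> (real \<times> real) measure" where
  "bivariate_normal m1 m2 s11 s12 s22 =
     density lborel (\<lambda>z. ennreal (bivariate_normal_density m1 m2 s11 s12 s22 z))"

definition alpha_r :: "real \<Rightarrow> real \<Rightarrow> real \<Rightarrow> real" where
  "alpha_r r c C =
     (let a = - r / sqrt c; \<rho>0 = sqrt (1 - (c / C)\<^sup>2) in
      (Phi a - Phi (2 * a)) * Phi (a * (1 + 2 * \<rho>0) / sqrt (1 - \<rho>0\<^sup>2)))"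

end

theory Submission
  imports Defs
begin

text \<open>Write Z = (X, Y). Then X ~ N(m1, s11) and, given X = x, Y is normal with mean
  m2 + s12 / s11 * (x - m1) and variance det \<Sigma> / s11. Restrict X to the strip where its
  standardisation lies in (2a, a]; this strip has probability \<Phi>(a) - \<Phi>(2a) and lies
  left of m1 - t because s11 \<ge> \<lambda>min \<ge> cn. On the strip the standardised threshold
  of the conditional law of Y at m2 - t is at least a(1 + 2\<rho>0)/sqrt(1 - \<rho>0^2),
  since the eigenvalue bounds give det \<Sigma> \<ge> cn s11 and
  |s12| / sqrt(det \<Sigma>) \<le> \<rho>0 / (c/C), with c/C = sqrt(1 - \<rho>0^2).\<close>

lemma eigenvalues2_iff: "l \<in> eigenvalues2 s11 s12 s22 \<longleftrightarrow> (l - s11) * (l - s22) = s12\<^sup>2"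
proof
  assume "l \<in> eigenvalues2 s11 s12 s22"
  then obtain x y where nz: "(x, y) \<noteq> (0, 0)" and e1: "s11 * x + s12 * y = l * x"
    and e2: "s12 * x + s22 * y = l * y" unfolding eigenvalues2_def by auto
  have "((l - s11) * (l - s22) - s12\<^sup>2) * x
      = (l - s22) * ((l - s11) * x - s12 * y) - s12 * (s12 * x - (l - s22) * y)"
    by (simp add: algebra_simps power2_eq_square)
  also have "\<dots> = 0" using e1 e2 by (simp add: algebra_simps)
  finally have x0: "((l - s11) * (l - s22) - s12\<^sup>2) * x = 0" .
  have "((l - s11) * (l - s22) - s12\<^sup>2) * y
      = (l - s11) * ((l - s22) * y - s12 * x) - s12 * (s12 * y - (l - s11) * x)"
    by (simp add: algebra_simps power2_eq_square)
  also have "\<dots> = 0" using e1 e2 by (simp add: algebra_simps)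
  finally have y0: "((l - s11) * (l - s22) - s12\<^sup>2) * y = 0" .
  from x0 y0 nz show "(l - s11) * (l - s22) = s12\<^sup>2" by auto
next
  assume char: "(l - s11) * (l - s22) = s12\<^sup>2"
  show "l \<in> eigenvalues2 s11 s12 s22"
  proof (cases "s12 = 0 \<and> l = s11")
    case True
    then show ?thesis unfolding eigenvalues2_def by (intro CollectI exI[of _ 1] exI[of _ 0]) auto
  next
    case False
    have "s12 * s12 + s22 * (l - s11) = l * (l - s11)"
      using char by (simp add: algebra_simps power2_eq_square)
    with False show ?thesis unfolding eigenvalues2_def
      by (intro CollectI exI[of _ s12] exI[of _ "l - s11"]) (auto simp: algebra_simps)
  qed
qed

lemma eigenvalues2_eq:
  "eigenvalues2 s11 s12 s22 =
     {(s11 + s22) / 2 - sqrt (((s11 - s22) / 2)\<^sup>2 + s12\<^sup>2),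
      (s11 + s22) / 2 + sqrt (((s11 - s22) / 2)\<^sup>2 + s12\<^sup>2)}"
proof -
  define D where "D = sqrt (((s11 - s22) / 2)\<^sup>2 + s12\<^sup>2)"
  have DD: "D\<^sup>2 = ((s11 - s22) / 2)\<^sup>2 + s12\<^sup>2"
    unfolding D_def by simp
  have "l \<in> eigenvalues2 s11 s12 s22 \<longleftrightarrow> l = (s11 + s22) / 2 - D \<or> l = (s11 + s22) / 2 + D" for l
  proof -
    have "(l - s11) * (l - s22) - s12\<^sup>2 = (l - (s11 + s22) / 2)\<^sup>2 - D\<^sup>2"
      unfolding DD by (simp add: field_simps power2_eq_square)
    then have "l \<in> eigenvalues2 s11 s12 s22 \<longleftrightarrow> (l - (s11 + s22) / 2)\<^sup>2 = D\<^sup>2"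
      unfolding eigenvalues2_iff by (metis eq_iff_diff_eq_0)
    also have "\<dots> \<longleftrightarrow> l - (s11 + s22) / 2 = D \<or> l - (s11 + s22) / 2 = - D"
      by (rule power2_eq_iff)
    finally show ?thesis by auto
  qed
  then show ?thesis unfolding D_def by auto
qed

lemma lambda_min2_eq:
  "lambda_min2 s11 s12 s22 = (s11 + s22) / 2 - sqrt (((s11 - s22) / 2)\<^sup>2 + s12\<^sup>2)"
  unfolding lambda_min2_def eigenvalues2_eq by (rule cInf_eq_minimum) auto

lemma lambda_max2_eq:
  "lambda_max2 s11 s12 s22 = (s11 + s22) / 2 + sqrt (((s11 - s22) / 2)\<^sup>2 + s12\<^sup>2)"
  unfolding lambda_max2_def eigenvalues2_eq by (rule cSup_eq_maximum) auto

lemma lambda_min2_le_diag: "lambda_min2 s11 s12 s22 \<le> s11" "lambda_min2 s11 s12 s22 \<le> s22"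
proof -
  have "\<bar>(s11 - s22) / 2\<bar> \<le> sqrt (((s11 - s22) / 2)\<^sup>2 + s12\<^sup>2)" by (rule real_sqrt_ge_abs1)
  then show "lambda_min2 s11 s12 s22 \<le> s11" "lambda_min2 s11 s12 s22 \<le> s22"
    unfolding lambda_min2_eq abs_le_iff by (simp_all add: field_simps)
qed

lemma diag_le_lambda_max2: "s11 \<le> lambda_max2 s11 s12 s22" "s22 \<le> lambda_max2 s11 s12 s22"
proof -
  have "\<bar>(s11 - s22) / 2\<bar> \<le> sqrt (((s11 - s22) / 2)\<^sup>2 + s12\<^sup>2)" by (rule real_sqrt_ge_abs1)
  then show "s11 \<le> lambda_max2 s11 s12 s22" "s22 \<le> lambda_max2 s11 s12 s22"
    unfolding lambda_max2_eq abs_le_iff by (simp_all add: field_simps)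
qed

lemma lambda_min2_mult_max2: "lambda_min2 s11 s12 s22 * lambda_max2 s11 s12 s22 = s11 * s22 - s12\<^sup>2"
proof -
  have "(sqrt (((s11 - s22) / 2)\<^sup>2 + s12\<^sup>2))\<^sup>2 = ((s11 - s22) / 2)\<^sup>2 + s12\<^sup>2" by simp
  then show ?thesis
    unfolding lambda_min2_eq lambda_max2_eq
    by (simp add: algebra_simps power2_eq_square field_simps)
qed

lemma diag_det_bounds_of_eigenvalue_bounds:
  fixes c C N :: real
  assumes "0 \<le> c" "c \<le> C" "0 \<le> N"
    and lmin: "c * N \<le> lambda_min2 s11 s12 s22" and lmax: "lambda_max2 s11 s12 s22 \<le> C * N"
  shows "c * N \<le> s11" "c * N * s11 \<le> s11 * s22 - s12\<^sup>2"
    "c * s11 * s22 \<le> C * (s11 * s22 - s12\<^sup>2)"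
proof -
  let ?l = "lambda_min2 s11 s12 s22" and ?L = "lambda_max2 s11 s12 s22"
  have diag: "?l \<le> s11" "?l \<le> s22" "s11 \<le> ?L" "s22 \<le> ?L"
    by (simp_all add: lambda_min2_le_diag diag_le_lambda_max2)
  have l0: "0 \<le> ?l" using assms(1,3) lmin by (meson mult_nonneg_nonneg order_trans)
  show "c * N \<le> s11" using lmin diag by linarith
  have "c * N * s11 \<le> ?l * ?L"
    using lmin diag l0 assms(1,3) by (intro mult_mono) auto
  then show "c * N * s11 \<le> s11 * s22 - s12\<^sup>2" by (simp add: lambda_min2_mult_max2)
  have "c * (s11 * s22) \<le> c * (?L * ?L)"
    using diag l0 assms(1) by (intro mult_left_mono mult_mono) auto
  also have "\<dots> = (c * ?L) * ?L" by simp
  also have "\<dots> \<le> (C * ?l) * ?L"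
  proof (rule mult_right_mono)
    have "c * ?L \<le> c * (C * N)" using lmax assms(1) by (rule mult_left_mono)
    also have "\<dots> = C * (c * N)" by simp
    also have "\<dots> \<le> C * ?l" using lmin assms(1,2) by (intro mult_left_mono) auto
    finally show "c * ?L \<le> C * ?l" .
    show "0 \<le> ?L" using l0 diag by linarith
  qed
  finally show "c * s11 * s22 \<le> C * (s11 * s22 - s12\<^sup>2)"
    by (simp add: lambda_min2_mult_max2[symmetric] ac_simps)
qed

lemma Phi_nonneg [simp]: "0 \<le> Phi t"
  unfolding Phi_def by simp

lemma Phi_mono:
  assumes "s \<le> t"
  shows "Phi s \<le> Phi t"
proof -
  interpret prob_space "density lborel std_normal_density" by (rule prob_space_normal_density) simp
  show ?thesis unfolding Phi_def using assms by (intro finite_measure_mono) auto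
qed

lemma emeasure_std_normal_atMost:
  "emeasure (density lborel std_normal_density) {..t} = Phi t"
proof -
  interpret prob_space "density lborel std_normal_density" by (rule prob_space_normal_density) simp
  show ?thesis unfolding Phi_def by (simp add: emeasure_eq_measure)
qed

lemma emeasure_std_normal_greaterThanAtMost:
  assumes "s \<le> t"
  shows "emeasure (density lborel std_normal_density) {s<..t} = Phi t - Phi s"
proof -
  interpret prob_space "density lborel std_normal_density" by (rule prob_space_normal_density) simp
  have "{s<..t} = {..t} - {..s}" by auto
  then have "measure (density lborel std_normal_density) {s<..t} = Phi t - Phi s"
    unfolding Phi_def using assms by (simp add: finite_measure_Diff)
  then show ?thesis by (simp add: emeasure_eq_measure)
qed

lemma normal_density_at_affine:
  assumes "0 < \<sigma>"
  shows "normal_density \<mu> \<sigma> (\<mu> + \<sigma> * x) = std_normal_density x / \<sigma>"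
proof -
  have "sqrt (2 * pi * \<sigma>\<^sup>2) = sqrt (2 * pi) * \<sigma>" using assms by (simp add: real_sqrt_mult)
  then show ?thesis using assms unfolding normal_density_def by (simp add: power_mult_distrib field_simps)
qed

lemma nn_integral_normal_density_standardize:
  fixes h :: "real \<Rightarrow> ennreal"
  assumes \<sigma>: "0 < \<sigma>" and [measurable]: "h \<in> borel_measurable borel"
  shows "(\<integral>\<^sup>+x. normal_density \<mu> \<sigma> x * h ((x - \<mu>) / \<sigma>) \<partial>lborel)
       = (\<integral>\<^sup>+u. std_normal_density u * h u \<partial>lborel)"
proof -
  have "(\<integral>\<^sup>+x. normal_density \<mu> \<sigma> x * h ((x - \<mu>) / \<sigma>) \<partial>lborel)
      = ennreal \<sigma> * (\<integral>\<^sup>+u. normal_density \<mu> \<sigma> (\<mu> + \<sigma> * u) * h u \<partial>lborel)"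
    using nn_integral_real_affine[where t = \<mu> and c = \<sigma>
        and f = "\<lambda>x. normal_density \<mu> \<sigma> x * h ((x - \<mu>) / \<sigma>)"] \<sigma>
    by simp
  also have "\<dots> = (\<integral>\<^sup>+u. ennreal \<sigma> * (normal_density \<mu> \<sigma> (\<mu> + \<sigma> * u) * h u) \<partial>lborel)"
    by (rule nn_integral_cmult[symmetric]) measurable
  also have "\<dots> = (\<integral>\<^sup>+u. std_normal_density u * h u \<partial>lborel)"
    using \<sigma> by (intro nn_integral_cong)
      (simp add: normal_density_at_affine mult.assoc[symmetric] ennreal_mult[symmetric])
  finally show ?thesis .
qed

lemma nn_integral_normal_density_indicator_standardized:
  assumes "0 < \<sigma>" and [measurable]: "S \<in> sets borel"
  shows "(\<integral>\<^sup>+x. ennreal (normal_density \<mu> \<sigma> x) * indicator S ((x - \<mu>) / \<sigma>) \<partial>lborel)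
       = emeasure (density lborel std_normal_density) S"
  by (simp add: nn_integral_normal_density_standardize[OF assms(1)] emeasure_density)

lemma borel_measurable_bivariate_normal_density[measurable]:
  "bivariate_normal_density m1 m2 s11 s12 s22 \<in> borel_measurable borel"
  unfolding borel_prod[symmetric] bivariate_normal_density_def[abs_def] Let_def by measurable

lemma bivariate_normal_density_factor:
  assumes s11: "0 < s11" and det: "0 < s11 * s22 - s12\<^sup>2"
  shows "bivariate_normal_density m1 m2 s11 s12 s22 (x, y) =
    normal_density m1 (sqrt s11) x *
    normal_density (m2 + s12 / s11 * (x - m1)) (sqrt ((s11 * s22 - s12\<^sup>2) / s11)) y"
proof -
  define d where "d = s11 * s22 - s12\<^sup>2"
  define u where "u = x - m1"
  define v where "v = y - m2"
  have d: "0 < d" using det d_def by simp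
  have exponent: "- (s22 * u\<^sup>2 - 2 * s12 * u * v + s11 * v\<^sup>2) / (2 * d) =
     - u\<^sup>2 / (2 * (sqrt s11)\<^sup>2) + - (v - s12 / s11 * u)\<^sup>2 / (2 * (sqrt (d / s11))\<^sup>2)"
    using s11 d unfolding d_def by (simp add: field_simps power2_eq_square)
  have "sqrt (2 * pi * (sqrt s11)\<^sup>2) * sqrt (2 * pi * (sqrt (d / s11))\<^sup>2)
      = sqrt ((2 * pi * s11) * (2 * pi * (d / s11)))"
    using s11 d by (simp only: real_sqrt_pow2 less_imp_le divide_nonneg_pos real_sqrt_mult)
  also have "(2 * pi * s11) * (2 * pi * (d / s11)) = (2 * pi)\<^sup>2 * d"
    using s11 by (simp add: field_simps power2_eq_square)
  finally have normalisation: "sqrt (2 * pi * (sqrt s11)\<^sup>2) * sqrt (2 * pi * (sqrt (d / s11))\<^sup>2)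
      = 2 * pi * sqrt d"
    by (simp add: real_sqrt_mult)
  show ?thesis
    unfolding bivariate_normal_density_def normal_density_def Let_def
    using exponent normalisation s11 d unfolding d_def[symmetric] u_def v_def
    by (simp add: exp_add[symmetric] field_simps)
qed

lemma emeasure_bivariate_normal_quadrant:
  assumes s11: "0 < s11" and det: "0 < s11 * s22 - s12\<^sup>2"
  shows "emeasure (bivariate_normal m1 m2 s11 s12 s22) ({..p} \<times> {..q}) =
    (\<integral>\<^sup>+x. ennreal (normal_density m1 (sqrt s11) x *
        Phi ((q - (m2 + s12 / s11 * (x - m1))) / sqrt ((s11 * s22 - s12\<^sup>2) / s11)))
      * indicator {..p} x \<partial>lborel)"
proof -
  define \<mu> where "\<mu> x = m2 + s12 / s11 * (x - m1)" for x
  define \<tau> where "\<tau> = sqrt ((s11 * s22 - s12\<^sup>2) / s11)"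
  have \<tau>: "0 < \<tau>" unfolding \<tau>_def using s11 det by simp
  define g where "g x y = (ennreal (normal_density m1 (sqrt s11) x) * indicator {..p} x) *
      (ennreal (normal_density (\<mu> x) \<tau> y) * indicator {..q} y)" for x y
  have conditional: "(\<integral>\<^sup>+y. ennreal (normal_density (\<mu> x) \<tau> y) * indicator {..q} y \<partial>lborel)
      = Phi ((q - \<mu> x) / \<tau>)" for x
  proof -
    have "indicator {..q} y = (indicator {..(q - \<mu> x) / \<tau>} ((y - \<mu> x) / \<tau>) :: ennreal)" for y
      using \<tau> by (simp add: indicator_def divide_right_mono divide_le_cancel)
    then show ?thesis
      by (simp add: nn_integral_normal_density_indicator_standardized[OF \<tau>]
          emeasure_std_normal_atMost)
  qed
  have "emeasure (bivariate_normal m1 m2 s11 s12 s22) ({..p} \<times> {..q}) =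
      (\<integral>\<^sup>+z. ennreal (bivariate_normal_density m1 m2 s11 s12 s22 z) * indicator ({..p} \<times> {..q}) z
        \<partial>lborel)"
    unfolding bivariate_normal_def
    by (rule emeasure_density) (auto intro: borel_closed closed_Times)
  also have "\<dots> = (\<integral>\<^sup>+z. ennreal (bivariate_normal_density m1 m2 s11 s12 s22 z)
        * indicator ({..p} \<times> {..q}) z \<partial>(lborel \<Otimes>\<^sub>M lborel))"
    by (simp add: lborel_prod)
  also have "\<dots> = (\<integral>\<^sup>+z. g (fst z) (snd z) \<partial>(lborel \<Otimes>\<^sub>M lborel))"
    by (intro nn_integral_cong)
      (auto simp: g_def bivariate_normal_density_factor[OF s11 det] \<mu>_def \<tau>_def
        indicator_times ennreal_mult mult_ac)
  also have "\<dots> = (\<integral>\<^sup>+x. \<integral>\<^sup>+y. g x y \<partial>lborel \<partial>lborel)"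
  proof -
    have "(\<lambda>z. g (fst z) (snd z)) \<in> borel_measurable (lborel \<Otimes>\<^sub>M lborel)"
      unfolding g_def normal_density_def \<mu>_def by measurable
    from lborel.nn_integral_fst[OF this] show ?thesis by simp
  qed
  also have "\<dots> = (\<integral>\<^sup>+x. (ennreal (normal_density m1 (sqrt s11) x) * indicator {..p} x) *
        Phi ((q - \<mu> x) / \<tau>) \<partial>lborel)"
    by (simp add: g_def nn_integral_cmult conditional)
  finally show ?thesis
    unfolding \<mu>_def \<tau>_def by (simp add: ennreal_mult mult_ac)
qed

lemma bivariate_normal_quadrant_ge:
  assumes s11: "0 < s11" and det: "0 < s11 * s22 - s12\<^sup>2" and "b1 \<le> b2"
    and strip: "\<And>x. b1 < (x - m1) / sqrt s11 \<Longrightarrow> (x - m1) / sqrt s11 \<le> b2 \<Longrightarrow>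
      x \<le> p \<and> k \<le> (q - (m2 + s12 / s11 * (x - m1))) / sqrt ((s11 * s22 - s12\<^sup>2) / s11)"
  shows "ennreal ((Phi b2 - Phi b1) * Phi k)
    \<le> emeasure (bivariate_normal m1 m2 s11 s12 s22) ({..p} \<times> {..q})"
proof -
  define \<sigma> where "\<sigma> = sqrt s11"
  define K where "K x = Phi ((q - (m2 + s12 / s11 * (x - m1))) / sqrt ((s11 * s22 - s12\<^sup>2) / s11))"
    for x
  have \<sigma>: "0 < \<sigma>" unfolding \<sigma>_def using s11 by simp
  have "ennreal ((Phi b2 - Phi b1) * Phi k)
      = ennreal (Phi k) * emeasure (density lborel std_normal_density) {b1<..b2}"
    using \<open>b1 \<le> b2\<close> Phi_mono[OF \<open>b1 \<le> b2\<close>]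
    by (simp add: emeasure_std_normal_greaterThanAtMost ennreal_mult mult.commute)
  also have "\<dots> = ennreal (Phi k) *
      (\<integral>\<^sup>+x. ennreal (normal_density m1 \<sigma> x) * indicator {b1<..b2} ((x - m1) / \<sigma>) \<partial>lborel)"
    by (simp add: nn_integral_normal_density_indicator_standardized[OF \<sigma>])
  also have "\<dots> = (\<integral>\<^sup>+x. ennreal (Phi k) *
      (ennreal (normal_density m1 \<sigma> x) * indicator {b1<..b2} ((x - m1) / \<sigma>)) \<partial>lborel)"
    by (rule nn_integral_cmult[symmetric]) measurable
  also have "\<dots> \<le> (\<integral>\<^sup>+x. ennreal (normal_density m1 \<sigma> x * K x) * indicator {..p} x \<partial>lborel)"
  proof (rule nn_integral_mono)
    fix x
    show "ennreal (Phi k) * (ennreal (normal_density m1 \<sigma> x) * indicator {b1<..b2} ((x - m1) / \<sigma>))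
      \<le> ennreal (normal_density m1 \<sigma> x * K x) * indicator {..p} x"
    proof (cases "(x - m1) / \<sigma> \<in> {b1<..b2}")
      case True
      with strip have "x \<le> p" "Phi k \<le> K x" unfolding K_def \<sigma>_def by (auto intro: Phi_mono)
      then have "ennreal (Phi k) * ennreal (normal_density m1 \<sigma> x)
          \<le> ennreal (K x) * ennreal (normal_density m1 \<sigma> x)"
        by (intro mult_right_mono ennreal_leI) auto
      then show ?thesis
        using True \<open>x \<le> p\<close> by (simp add: K_def ennreal_mult mult_ac)
    qed simp
  qed
  also have "\<dots> = emeasure (bivariate_normal m1 m2 s11 s12 s22) ({..p} \<times> {..q})"
    unfolding K_def \<sigma>_def by (rule emeasure_bivariate_normal_quadrant[symmetric, OF s11 det])
  finally show ?thesis .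
qed

lemma abs_offdiag_div_sqrt_det_le:
  fixes k s11 s12 s22 :: real
  assumes k: "0 < k" "k \<le> 1" and det: "0 < s11 * s22 - s12\<^sup>2"
    and corr: "k * (s11 * s22) \<le> s11 * s22 - s12\<^sup>2"
  shows "\<bar>s12\<bar> / sqrt (s11 * s22 - s12\<^sup>2) \<le> sqrt (1 - k\<^sup>2) / k"
proof -
  define d where "d = s11 * s22 - s12\<^sup>2"
  have "0 \<le> s11 * s22" using det zero_le_power2[of s12] by linarith
  then have "k\<^sup>2 * (s11 * s22) \<le> k * (s11 * s22)"
    using k by (intro mult_right_mono) (auto simp: power2_eq_square)
  with corr have "s12\<^sup>2 * k\<^sup>2 \<le> (1 - k\<^sup>2) * d" unfolding d_def by (simp add: algebra_simps)
  then have "sqrt (s12\<^sup>2 * k\<^sup>2) \<le> sqrt ((1 - k\<^sup>2) * d)" by (rule real_sqrt_le_mono)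
  then have "\<bar>s12\<bar> * k \<le> sqrt (1 - k\<^sup>2) * sqrt d" using k by (simp add: real_sqrt_mult)
  then show ?thesis using k det unfolding d_def by (simp add: field_simps)
qed

lemma strip_conditional_threshold_ge:
  fixes c C N r s11 s12 s22 m1 m2 x :: real
  defines "a \<equiv> - r / sqrt c" and "\<rho>0 \<equiv> sqrt (1 - (c / C)\<^sup>2)"
  assumes c: "0 < c" "c \<le> C" and N: "0 < N" and r: "0 \<le> r"
    and diag: "c * N \<le> s11" and det_ge: "c * N * s11 \<le> s11 * s22 - s12\<^sup>2"
    and corr: "c * s11 * s22 \<le> C * (s11 * s22 - s12\<^sup>2)"
    and strip: "2 * a < (x - m1) / sqrt s11" "(x - m1) / sqrt s11 \<le> a"
  shows "x \<le> m1 - r * sqrt N \<and>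
    a * (1 + 2 * \<rho>0) / sqrt (1 - \<rho>0\<^sup>2)
      \<le> (m2 - r * sqrt N - (m2 + s12 / s11 * (x - m1))) / sqrt ((s11 * s22 - s12\<^sup>2) / s11)"
proof -
  define d where "d = s11 * s22 - s12\<^sup>2"
  define t where "t = r * sqrt N"
  define \<sigma> where "\<sigma> = sqrt s11"
  define k where "k = c / C"
  define u where "u = (x - m1) / \<sigma>"
  have cN: "0 < c * N" using c N by simp
  then have s11: "0 < s11" using diag by linarith
  have d: "0 < d" unfolding d_def using det_ge mult_pos_pos[OF cN s11] by linarith
  have \<sigma>: "0 < \<sigma>" unfolding \<sigma>_def using s11 by simp
  have k: "0 < k" "k \<le> 1" unfolding k_def using c by auto
  have a: "a \<le> 0" unfolding a_def using c r by simp
  have k2: "k\<^sup>2 \<le> 1" using k by (simp add: power_le_one)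
  have \<rho>0_k: "\<rho>0 = sqrt (1 - k\<^sup>2)" unfolding \<rho>0_def k_def ..
  have sqrt_one_minus_\<rho>0: "sqrt (1 - \<rho>0\<^sup>2) = k"
    unfolding \<rho>0_k using k k2 by simp
  have threshold: "(m2 - t - (m2 + s12 / s11 * (x - m1))) / sqrt ((s11 * s22 - s12\<^sup>2) / s11)
      = - (t * \<sigma> / sqrt d) - s12 / sqrt d * u"
  proof -
    have sd: "sqrt ((s11 * s22 - s12\<^sup>2) / s11) = sqrt d / \<sigma>"
      unfolding d_def \<sigma>_def by (simp add: real_sqrt_divide)
    have mean: "s12 / s11 * (x - m1) = s12 * u / \<sigma>"
      using \<sigma> s11 unfolding u_def \<sigma>_def by (simp add: field_simps)
    have "0 < sqrt d" using d by simp
    then show ?thesis unfolding sd mean using \<sigma> by (simp add: field_simps)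
  qed
  have "t * \<sigma> * sqrt c = r * sqrt (c * N * s11)"
    unfolding t_def \<sigma>_def by (simp add: real_sqrt_mult)
  also have "\<dots> \<le> r * sqrt d"
    using det_ge r unfolding d_def by (intro mult_left_mono real_sqrt_le_mono)
  finally have scale: "t * \<sigma> / sqrt d \<le> - a"
    unfolding a_def using c d by (simp add: field_simps)
  have "\<bar>s12\<bar> / sqrt d \<le> \<rho>0 / k"
    unfolding d_def \<rho>0_k
  proof (rule abs_offdiag_div_sqrt_det_le[OF k])
    show "0 < s11 * s22 - s12\<^sup>2" using d d_def by simp
    show "k * (s11 * s22) \<le> s11 * s22 - s12\<^sup>2" using corr c unfolding k_def by (simp add: field_simps)
  qed
  moreover have "\<bar>u\<bar> \<le> - 2 * a" using strip a unfolding u_def \<sigma>_def by auto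
  ultimately have "\<bar>s12 / sqrt d * u\<bar> \<le> \<rho>0 / k * (- 2 * a)"
    using d k k2 \<rho>0_k unfolding abs_mult by (intro mult_mono) auto
  also have "\<dots> = - (2 * a * \<rho>0 / k)" by simp
  finally have cross: "\<bar>s12 / sqrt d * u\<bar> \<le> - (2 * a * \<rho>0 / k)" .
  have "a * (1 + 2 * \<rho>0) / k = a / k + 2 * a * \<rho>0 / k"
    using k by (simp add: field_simps)
  also have "\<dots> \<le> a + - (s12 / sqrt d * u)"
  proof (rule add_mono)
    show "a / k \<le> a" using mult_left_mono_neg[OF k(2) a] k by (simp add: field_simps)
    show "2 * a * \<rho>0 / k \<le> - (s12 / sqrt d * u)" using abs_le_D1[OF cross] by linarith
  qed
  also have "\<dots> \<le> - (t * \<sigma> / sqrt d) - s12 / sqrt d * u" using scale by simp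
  finally have "a * (1 + 2 * \<rho>0) / k \<le> - (t * \<sigma> / sqrt d) - s12 / sqrt d * u" .
  moreover have "x \<le> m1 - t"
  proof -
    have "sqrt c * sqrt N \<le> \<sigma>" unfolding \<sigma>_def using diag by (simp add: real_sqrt_mult[symmetric])
    from mult_left_mono[OF this r] have "t \<le> - \<sigma> * a"
      unfolding t_def a_def using c by (simp add: field_simps)
    moreover have "x - m1 \<le> \<sigma> * a" using strip \<sigma> unfolding \<sigma>_def by (simp add: field_simps)
    ultimately show ?thesis by linarith
  qed
  ultimately show ?thesis using sqrt_one_minus_\<rho>0 threshold unfolding t_def by simp
qed

theorem lemma2p10:
  fixes n :: nat and s11 s12 s22 m1 m2 c C r t :: real
    and M :: "'a measure" and Z :: "'a \<Rightarrow> real \<times> real"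
  assumes "n \<ge> 1"
    and "0 < c" and "c \<le> C"
    and "pos_def2 s11 s12 s22"
    and "c * real n \<le> lambda_min2 s11 s12 s22"
    and "lambda_min2 s11 s12 s22 \<le> lambda_max2 s11 s12 s22"
    and "lambda_max2 s11 s12 s22 \<le> C * real n"
    and "prob_space M"
    and "Z \<in> measurable M lborel"
    and "distr M lborel Z = bivariate_normal m1 m2 s11 s12 s22"
    and "r \<ge> 1" and "t = r * sqrt (real n)"
  shows "prob_space.prob M {\<omega> \<in> space M. Z \<omega> \<in> {..m1 - t} \<times> {..m2 - t}} \<ge> alpha_r r c C"
proof -
  interpret M: prob_space M by fact
  let ?Q = "{..m1 - t} \<times> {..m2 - t}"
  have N: "0 < real n" using \<open>n \<ge> 1\<close> by simp
  note entry_bounds = diag_det_bounds_of_eigenvalue_bounds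
    [OF less_imp_le[OF \<open>0 < c\<close>] \<open>c \<le> C\<close> less_imp_le[OF N]
      \<open>c * real n \<le> lambda_min2 s11 s12 s22\<close> \<open>lambda_max2 s11 s12 s22 \<le> C * real n\<close>]
  have cN: "0 < c * real n" using \<open>0 < c\<close> N by simp
  then have s11: "0 < s11" using entry_bounds(1) by linarith
  have det: "0 < s11 * s22 - s12\<^sup>2" using entry_bounds(2) mult_pos_pos[OF cN s11] by linarith
  have "ennreal (alpha_r r c C) \<le> emeasure (bivariate_normal m1 m2 s11 s12 s22) ?Q"
    unfolding alpha_r_def Let_def
  proof (rule bivariate_normal_quadrant_ge[OF s11 det])
    have "0 \<le> r / sqrt c" using \<open>0 < c\<close> \<open>r \<ge> 1\<close> by simp
    then show "2 * (- r / sqrt c) \<le> - r / sqrt c" by linarith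
  qed (use strip_conditional_threshold_ge[OF \<open>0 < c\<close> \<open>c \<le> C\<close> N _ entry_bounds]
      \<open>0 < c\<close> \<open>r \<ge> 1\<close> \<open>t = r * sqrt (real n)\<close> in auto)
  also have "\<dots> = emeasure M {\<omega> \<in> space M. Z \<omega> \<in> ?Q}"
    unfolding \<open>distr M lborel Z = _\<close>[symmetric] using \<open>Z \<in> measurable M lborel\<close>
    by (subst emeasure_distr) (auto intro!: borel_closed closed_Times arg_cong[where f = "emeasure M"])
  also have "\<dots> = ennreal (M.prob {\<omega> \<in> space M. Z \<omega> \<in> ?Q})"
    by (rule M.emeasure_eq_measure)
  finally show ?thesis by (simp add: ennreal_le_iff)
qed

end
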